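(* Let $G$ be a group and $S\subseteq G$ a conjugation invariant generating set of $G$. Suppose there exist homogeneous quasi-morphisms $q_1,\dots,q_m:G\to\mathbb{R}$ which are linearly independent (as elements of the real vector space of functions $G\to\mathbb R$) and each of which is bounded on $S$. Then there is a quasi-isometric embedding of $\mathbb{Z}^m$ into $\mathrm{Cay}(G,S)$.
   Context: A quasi-morphism is a function $q:G\to\mathbb{R}$ with $\sup_{g,h\in G}|q(gh)-q(g)-q(h)|<\infty$ (this supremum is the defect); it is homogeneous if $q(g^k)=kq(g)$ for all $g\in G$, $k\in\mathbb{Z}$. $S$ is conjugation invariant if $gsg^{-1}\in S$ for all $g\in G$, $s\in S$. $\mathrm{Cay}(G,S)$ is the graph with vertex set $G$ and an (undirected) edge between $g$ and $sg$ for every $g\in G$, $s\in S$, with the path metric in which edges have length $1$. $\mathbb{Z}^m$ carries the $\ell^1$ metric. A map $f$ between metric spaces is a quasi-isometric embedding if there are $K\ge1,C\ge0$ with $\frac1K d(x,y)-C\le d(f(x),f(y))\le Kd(x,y)+C$. *)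

theory Defs
  imports "HOL-Algebra.Algebra"
begin

definition quasi_morphism :: "('a, 'b) monoid_scheme \<Rightarrow> ('a \<Rightarrow> real) \<Rightarrow> bool" where
  "quasi_morphism G q \<longleftrightarrow>
     (\<exists>D. \<forall>g\<in>carrier G. \<forall>h\<in>carrier G. \<bar>q (g \<otimes>\<^bsub>G\<^esub> h) - q g - q h\<bar> \<le> D)"

definition homogeneous :: "('a, 'b) monoid_scheme \<Rightarrow> ('a \<Rightarrow> real) \<Rightarrow> bool" where
  "homogeneous G q \<longleftrightarrow> (\<forall>g\<in>carrier G. \<forall>k::int. q (g [^]\<^bsub>G\<^esub> k) = of_int k * q g)"

definition conj_invariant :: "('a, 'b) monoid_scheme \<Rightarrow> 'a set \<Rightarrow> bool" where
  "conj_invariant G S \<longleftrightarrow>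
     (\<forall>g\<in>carrier G. \<forall>s\<in>S. g \<otimes>\<^bsub>G\<^esub> s \<otimes>\<^bsub>G\<^esub> inv\<^bsub>G\<^esub> g \<in> S)"

definition lin_indep_on :: "('a, 'b) monoid_scheme \<Rightarrow> nat \<Rightarrow> (nat \<Rightarrow> 'a \<Rightarrow> real) \<Rightarrow> bool" where
  "lin_indep_on G m q \<longleftrightarrow>
     (\<forall>c::nat \<Rightarrow> real. (\<forall>g\<in>carrier G. (\<Sum>i<m. c i * q i g) = 0) \<longrightarrow> (\<forall>i<m. c i = 0))"

text \<open>Path metric of Cay(G,S): edges g -- s g for s in S; a path step multiplies on the
  left by an element of S or its inverse.\<close>
definition cay_dist :: "('a, 'b) monoid_scheme \<Rightarrow> 'a set \<Rightarrow> 'a \<Rightarrow> 'a \<Rightarrow> nat" where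
  "cay_dist G S g h = (LEAST n. \<exists>xs. length xs = n \<and>
      set xs \<subseteq> S \<union> (\<lambda>s. inv\<^bsub>G\<^esub> s) ` S \<and> h = foldr (\<lambda>x y. x \<otimes>\<^bsub>G\<^esub> y) xs g)"

text \<open>Z^m realised as integer functions on nat supported in {..<m}, with the l^1 metric.\<close>
definition Zm :: "nat \<Rightarrow> (nat \<Rightarrow> int) set" where
  "Zm m = {x. \<forall>i\<ge>m. x i = 0}"

definition l1_dist :: "nat \<Rightarrow> (nat \<Rightarrow> int) \<Rightarrow> (nat \<Rightarrow> int) \<Rightarrow> real" where
  "l1_dist m x y = (\<Sum>i<m. real_of_int \<bar>x i - y i\<bar>)"

definition qi_embedding_Zm_Cay ::
    "nat \<Rightarrow> ('a, 'b) monoid_scheme \<Rightarrow> 'a set \<Rightarrow> ((nat \<Rightarrow> int) \<Rightarrow> 'a) \<Rightarrow> bool" where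
  "qi_embedding_Zm_Cay m G S f \<longleftrightarrow>
     (\<forall>x\<in>Zm m. f x \<in> carrier G) \<and>
     (\<exists>K C. K \<ge> 1 \<and> C \<ge> 0 \<and> (\<forall>x\<in>Zm m. \<forall>y\<in>Zm m.
        l1_dist m x y / K - C \<le> real (cay_dist G S (f x) (f y)) \<and>
        real (cay_dist G S (f x) (f y)) \<le> K * l1_dist m x y + C))"

end

theory Submission
  imports Defs
begin

text \<open>
  Linear independence gives points g 0, ..., g (m-1) of G and coefficients c such that the
  functions p k = (\<Sum>i. c k i * q i) satisfy p k (g j) = \<delta> k j. The embedding sends x to
  g 0 [^] x 0 \<otimes> ... \<otimes> g (m-1) [^] x (m-1). Since S is conjugation invariant, a factor
  can be inserted anywhere in a product at the cost of its word length, which makes the map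
  Lipschitz. Homogeneous quasi-morphisms are conjugation invariant, so q i of the quotient of
  the images of x and y equals \<Sum>j. (y j - x j) * q i (g j) up to a bounded error; as q i is
  bounded on S it grows at most linearly with word length, and applying the p k recovers each
  y k - x k, bounding the l1 distance linearly by the Cayley distance.
\<close>

section \<open>Word length with respect to a symmetric set\<close>

lemma (in group) inv_mult_cancel_left [simp]:
  "x \<in> carrier G \<Longrightarrow> y \<in> carrier G \<Longrightarrow> inv x \<otimes> (x \<otimes> y) = y"
  by (simp add: m_assoc[symmetric])

locale word_metric = group G for G (structure) +
  fixes S :: "'a set"
  assumes S_subset: "S \<subseteq> carrier G"
begin

abbreviation letters :: "'a set" where
  "letters \<equiv> S \<union> (\<lambda>s. inv s) ` S"

inductive is_word :: "nat \<Rightarrow> 'a \<Rightarrow> bool" where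
  Nil: "is_word 0 \<one>"
| Cons: "x \<in> letters \<Longrightarrow> is_word n a \<Longrightarrow> is_word (Suc n) (x \<otimes> a)"

lemma letters_subset_carrier: "letters \<subseteq> carrier G"
  using S_subset by auto

lemma inv_letter: "x \<in> letters \<Longrightarrow> inv x \<in> letters"
  using S_subset by auto

lemma is_word_carrier: "is_word n a \<Longrightarrow> a \<in> carrier G"
  by (induction rule: is_word.induct) (use letters_subset_carrier in blast)+

lemma is_word_letter:
  assumes "x \<in> letters"
  shows "is_word 1 x"
proof -
  have "is_word 1 (x \<otimes> \<one>)"
    using is_word.Cons[OF assms is_word.Nil] by simp
  then show ?thesis
    using assms letters_subset_carrier by auto
qed

lemma is_word_mult: "is_word n a \<Longrightarrow> is_word l b \<Longrightarrow> is_word (n + l) (a \<otimes> b)"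
proof (induction rule: is_word.induct)
  case Nil
  then show ?case using is_word_carrier by simp
next
  case (Cons x n a)
  then have "is_word (Suc (n + l)) (x \<otimes> (a \<otimes> b))"
    by (blast intro: is_word.Cons)
  then show ?case
    using Cons letters_subset_carrier is_word_carrier by (auto simp: m_assoc)
qed

lemma is_word_inv: "is_word n a \<Longrightarrow> is_word n (inv a)"
proof (induction rule: is_word.induct)
  case Nil
  then show ?case by (auto intro: is_word.Nil)
next
  case (Cons x n a)
  then have "is_word (n + 1) (inv a \<otimes> inv x)"
    by (intro is_word_mult is_word_letter inv_letter)
  moreover have "x \<in> carrier G" "a \<in> carrier G"
    using Cons.hyps letters_subset_carrier is_word_carrier by auto
  ultimately show ?case by (simp add: inv_mult_group)
qed

lemma is_word_nat_pow: "is_word n a \<Longrightarrow> is_word (k * n) (a [^] (k::nat))"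
proof (induction k)
  case 0
  then show ?case by (auto intro: is_word.Nil)
next
  case (Suc k)
  then show ?case
    using is_word_mult[of "k * n" "a [^] k" n a] by (simp add: add.commute)
qed

lemma is_word_int_pow:
  assumes "is_word n a"
  shows "is_word (nat \<bar>k\<bar> * n) (a [^] (k::int))"
proof (cases "k < 0")
  case True
  then have "a [^] k = inv (a [^] nat (- k))"
    by (simp only: int_pow_def2 if_True)
  moreover have "nat \<bar>k\<bar> = nat (- k)"
    using True by simp
  ultimately show ?thesis
    using is_word_inv[OF is_word_nat_pow[OF assms]] by (simp only:)
next
  case False
  then have "a [^] k = a [^] nat k"
    by (simp only: int_pow_def2 if_False)
  moreover have "nat \<bar>k\<bar> = nat k"
    using False by simp
  ultimately show ?thesis
    using is_word_nat_pow[OF assms] by (simp only:)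
qed

lemma is_word_exists: "a \<in> generate G S \<Longrightarrow> \<exists>n. is_word n a"
proof (induction rule: generate.induct)
  case one
  then show ?case by (auto intro: is_word.Nil)
next
  case (incl h)
  then show ?case by (blast intro: is_word_letter)
next
  case (inv h)
  then show ?case by (blast intro: is_word_letter)
next
  case (eng h1 h2)
  then show ?case by (blast intro: is_word_mult)
qed

lemma is_word_iff_foldr:
  "is_word n a \<longleftrightarrow> (\<exists>xs. length xs = n \<and> set xs \<subseteq> letters \<and> a = foldr (\<otimes>) xs \<one>)"
proof
  show "is_word n a \<Longrightarrow> \<exists>xs. length xs = n \<and> set xs \<subseteq> letters \<and> a = foldr (\<otimes>) xs \<one>"
  proof (induction rule: is_word.induct)
    case (Cons x n a)
    then obtain xs where "length xs = n" "set xs \<subseteq> letters" "a = foldr (\<otimes>) xs \<one>"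
      by blast
    with Cons.hyps show ?case by (intro exI[of _ "x # xs"]) auto
  qed auto
  show "\<exists>xs. length xs = n \<and> set xs \<subseteq> letters \<and> a = foldr (\<otimes>) xs \<one> \<Longrightarrow> is_word n a"
  proof (elim exE conjE)
    fix xs assume "length xs = n" "set xs \<subseteq> letters" "a = foldr (\<otimes>) xs \<one>"
    then show "is_word n a"
    proof (induction xs arbitrary: n a)
      case Nil
      then show ?case by (simp add: is_word.Nil)
    next
      case (Cons x xs)
      then show ?case by (auto intro!: is_word.Cons)
    qed
  qed
qed

lemma foldr_carrier: "set xs \<subseteq> carrier G \<Longrightarrow> foldr (\<otimes>) xs \<one> \<in> carrier G"
  by (induction xs) auto

lemma foldr_mult_eq:
  "set xs \<subseteq> carrier G \<Longrightarrow> g \<in> carrier G \<Longrightarrow> foldr (\<otimes>) xs g = foldr (\<otimes>) xs \<one> \<otimes> g"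
  by (induction xs) (auto simp: m_assoc foldr_carrier)

lemma cay_dist_eq_Least:
  assumes "g \<in> carrier G" "h \<in> carrier G"
  shows "cay_dist G S g h = (LEAST n. is_word n (h \<otimes> inv g))"
proof -
  have path_iff: "h = foldr (\<otimes>) xs g \<longleftrightarrow> h \<otimes> inv g = foldr (\<otimes>) xs \<one>"
    if "set xs \<subseteq> letters" for xs
  proof -
    have xs: "set xs \<subseteq> carrier G" using that letters_subset_carrier by blast
    show ?thesis
      using assms foldr_carrier[OF xs] by (simp add: foldr_mult_eq[OF xs assms(1)] inv_solve_right')
  qed
  have "(\<exists>xs. length xs = n \<and> set xs \<subseteq> letters \<and> h = foldr (\<otimes>) xs g) \<longleftrightarrow>
      is_word n (h \<otimes> inv g)" for n
    unfolding is_word_iff_foldr by (intro ex_cong1) (use path_iff in blast)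
  then show ?thesis
    unfolding cay_dist_def by (simp only:)
qed

lemma cay_dist_le:
  "g \<in> carrier G \<Longrightarrow> h \<in> carrier G \<Longrightarrow> is_word n (h \<otimes> inv g) \<Longrightarrow> cay_dist G S g h \<le> n"
  by (simp add: cay_dist_eq_Least Least_le)

lemma is_word_cay_dist:
  assumes "generate G S = carrier G" "g \<in> carrier G" "h \<in> carrier G"
  shows "is_word (cay_dist G S g h) (h \<otimes> inv g)"
  using is_word_exists[of "h \<otimes> inv g"] assms by (auto simp: cay_dist_eq_Least intro: LeastI)

lemma conj_letter:
  assumes "conj_invariant G S" "u \<in> carrier G" "x \<in> letters"
  shows "u \<otimes> x \<otimes> inv u \<in> letters"
proof (cases "x \<in> S")
  case True
  then show ?thesis using assms unfolding conj_invariant_def by blast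
next
  case False
  then obtain s where s: "s \<in> S" "x = inv s" using assms by auto
  then have "u \<otimes> s \<otimes> inv u \<in> S" using assms unfolding conj_invariant_def by blast
  moreover have "inv (u \<otimes> s \<otimes> inv u) = u \<otimes> x \<otimes> inv u"
    using s S_subset assms(2) by (auto simp: inv_mult_group m_assoc)
  ultimately show ?thesis by force
qed

lemma is_word_conj:
  assumes "conj_invariant G S" "u \<in> carrier G"
  shows "is_word n a \<Longrightarrow> is_word n (u \<otimes> a \<otimes> inv u)"
proof (induction rule: is_word.induct)
  case Nil
  then show ?case using assms by (auto intro: is_word.Nil)
next
  case (Cons x n a)
  have "is_word (1 + n) ((u \<otimes> x \<otimes> inv u) \<otimes> (u \<otimes> a \<otimes> inv u))"
    using Cons assms by (intro is_word_mult is_word_letter conj_letter)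
  moreover have "x \<in> carrier G" "a \<in> carrier G"
    using Cons.hyps letters_subset_carrier is_word_carrier by auto
  then have "(u \<otimes> x \<otimes> inv u) \<otimes> (u \<otimes> a \<otimes> inv u) = u \<otimes> (x \<otimes> a) \<otimes> inv u"
    using assms(2) by (simp add: m_assoc)
  ultimately show ?case by simp
qed

lemma is_word_insert:
  assumes "conj_invariant G S" "is_word l c" "is_word n (u \<otimes> v)" "u \<in> carrier G" "v \<in> carrier G"
  shows "is_word (l + n) (u \<otimes> c \<otimes> v)"
proof -
  have "u \<otimes> c \<otimes> v = (u \<otimes> c \<otimes> inv u) \<otimes> (u \<otimes> v)"
    using assms is_word_carrier[OF assms(2)] by (simp add: m_assoc)
  then show ?thesis
    using is_word_mult[OF is_word_conj[OF assms(1,4,2)] assms(3)] by simp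
qed

end

fun pow_prod :: "('a, 'b) monoid_scheme \<Rightarrow> (nat \<Rightarrow> 'a) \<Rightarrow> (nat \<Rightarrow> int) \<Rightarrow> nat \<Rightarrow> 'a" where
  "pow_prod G g x 0 = \<one>\<^bsub>G\<^esub>"
| "pow_prod G g x (Suc n) = pow_prod G g x n \<otimes>\<^bsub>G\<^esub> g n [^]\<^bsub>G\<^esub> x n"

context group
begin

lemma pow_prod_carrier: "\<forall>j<n. g j \<in> carrier G \<Longrightarrow> pow_prod G g x n \<in> carrier G"
  by (induction n) auto

lemma pow_prod_quotient_Suc:
  assumes "\<forall>j<Suc n. g j \<in> carrier G"
  shows "pow_prod G g y (Suc n) \<otimes> inv (pow_prod G g x (Suc n)) =
    pow_prod G g y n \<otimes> g n [^] (y n - x n) \<otimes> inv (pow_prod G g x n)"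
proof -
  have "g n \<in> carrier G" "pow_prod G g y n \<in> carrier G" "pow_prod G g x n \<in> carrier G"
    using assms by (auto intro: pow_prod_carrier)
  then show ?thesis
    by (simp add: int_pow_diff inv_mult_group m_assoc)
qed

end

context word_metric
begin

lemma is_word_pow_prod_quotient:
  assumes "conj_invariant G S" "\<forall>j<n. g j \<in> carrier G" "\<forall>j<n. is_word (l j) (g j)"
  shows "is_word (\<Sum>j<n. nat \<bar>y j - x j\<bar> * l j) (pow_prod G g y n \<otimes> inv (pow_prod G g x n))"
  using assms(2,3)
proof (induction n)
  case 0
  then show ?case by (auto intro: is_word.Nil)
next
  case (Suc n)
  have "is_word (nat \<bar>y n - x n\<bar> * l n + (\<Sum>j<n. nat \<bar>y j - x j\<bar> * l j))
      (pow_prod G g y n \<otimes> g n [^] (y n - x n) \<otimes> inv (pow_prod G g x n))"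
    using Suc by (intro is_word_insert assms(1) is_word_int_pow pow_prod_carrier inv_closed) auto
  then show ?case
    using pow_prod_quotient_Suc[OF Suc.prems(1)] by (simp add: add.commute)
qed

lemma cay_dist_pow_prod_le:
  assumes "conj_invariant G S" "generate G S = carrier G" "\<forall>j<n. g j \<in> carrier G"
  shows "cay_dist G S (pow_prod G g x n) (pow_prod G g y n) \<le>
    (\<Sum>j<n. nat \<bar>y j - x j\<bar> * cay_dist G S \<one> (g j))"
proof -
  have "\<forall>j<n. is_word (cay_dist G S \<one> (g j)) (g j)"
    using is_word_cay_dist[OF assms(2) one_closed] assms(3) by fastforce
  then show ?thesis
    using assms by (intro cay_dist_le is_word_pow_prod_quotient pow_prod_carrier)
qed

end

section \<open>Homogeneous quasi-morphisms\<close>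

lemma zero_if_multiples_bounded:
  fixes x C :: real
  assumes "\<And>n::nat. real n * \<bar>x\<bar> \<le> C"
  shows "x = 0"
proof (rule ccontr)
  assume "x \<noteq> 0"
  then obtain n :: nat where "real n > C / \<bar>x\<bar>"
    using reals_Archimedean2 by blast
  with \<open>x \<noteq> 0\<close> have "real n * \<bar>x\<bar> > C"
    by (simp add: field_simps)
  with assms[of n] show False by simp
qed

locale homogeneous_quasi_morphism = group G for G (structure) +
  fixes q :: "'a \<Rightarrow> real" and D :: real
  assumes defect_le: "a \<in> carrier G \<Longrightarrow> b \<in> carrier G \<Longrightarrow> \<bar>q (a \<otimes> b) - q a - q b\<bar> \<le> D"
    and homogeneous: "homogeneous G q"
begin

lemma q_int_pow: "a \<in> carrier G \<Longrightarrow> q (a [^] (k::int)) = of_int k * q a"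
  using homogeneous unfolding homogeneous_def by blast

lemma q_nat_pow: "a \<in> carrier G \<Longrightarrow> q (a [^] (k::nat)) = real k * q a"
  using q_int_pow[of a "int k"] by (simp add: int_pow_int)

lemma q_one: "q \<one> = 0"
  using q_nat_pow[of \<one> 0] by simp

lemma q_inv: "a \<in> carrier G \<Longrightarrow> q (inv a) = - q a"
  using q_int_pow[of a "-1"] by (simp add: int_pow_neg)

lemma q_conj:
  assumes a: "a \<in> carrier G" and b: "b \<in> carrier G"
  shows "q (a \<otimes> b \<otimes> inv a) = q b"
proof -
  \<comment> \<open>By homogeneity, q of the conjugate of b^n and q(b^n) are n q(a b a^-1) and n q(b),
    while the defect bound says they differ by at most 2 D.\<close>
  have "real n * \<bar>q (a \<otimes> b \<otimes> inv a) - q b\<bar> \<le> 2 * D" for n :: nat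
  proof -
    have conj_pow: "(a \<otimes> b \<otimes> inv a) [^] n = a \<otimes> b [^] n \<otimes> inv a"
      using a b by (induction n) (auto simp: m_assoc)
    have "\<bar>q (a \<otimes> b [^] n \<otimes> inv a) - q (a \<otimes> b [^] n) - q (inv a)\<bar> \<le> D"
         "\<bar>q (a \<otimes> b [^] n) - q a - q (b [^] n)\<bar> \<le> D"
      using a b by (auto intro: defect_le)
    moreover have "q (a \<otimes> b [^] n \<otimes> inv a) = real n * q (a \<otimes> b \<otimes> inv a)"
      using conj_pow a b q_nat_pow[of "a \<otimes> b \<otimes> inv a" n] by simp
    ultimately have "\<bar>real n * q (a \<otimes> b \<otimes> inv a) - real n * q b\<bar> \<le> 2 * D"
      using a b by (simp add: q_nat_pow q_inv abs_le_iff)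
    then show ?thesis
      by (simp add: abs_mult flip: right_diff_distrib)
  qed
  then have "q (a \<otimes> b \<otimes> inv a) - q b = 0"
    by (rule zero_if_multiples_bounded)
  then show ?thesis by simp
qed

lemma q_insert:
  assumes "u \<in> carrier G" "c \<in> carrier G" "v \<in> carrier G"
  shows "\<bar>q (u \<otimes> c \<otimes> v) - q c - q (u \<otimes> v)\<bar> \<le> D"
proof -
  have "q (u \<otimes> c \<otimes> v) = q (c \<otimes> (v \<otimes> u))"
    using q_conj[of u "c \<otimes> (v \<otimes> u)"] assms by (simp add: m_assoc)
  moreover have "q (u \<otimes> v) = q (v \<otimes> u)"
    using q_conj[of u "v \<otimes> u"] assms by (simp add: m_assoc)
  ultimately show ?thesis
    using defect_le assms by simp
qed

lemma q_pow_prod_quotient: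
  assumes "\<forall>j<n. g j \<in> carrier G"
  shows "\<bar>q (pow_prod G g y n \<otimes> inv (pow_prod G g x n)) - (\<Sum>j<n. of_int (y j - x j) * q (g j))\<bar>
    \<le> real n * D"
  using assms
proof (induction n)
  case 0
  then show ?case by (simp add: q_one)
next
  case (Suc n)
  let ?u = "pow_prod G g y n" and ?c = "g n [^] (y n - x n)" and ?v = "inv (pow_prod G g x n)"
  have carrier: "?u \<in> carrier G" "pow_prod G g x n \<in> carrier G" "g n \<in> carrier G"
    using Suc.prems by (auto intro: pow_prod_carrier)
  have "\<bar>q (?u \<otimes> ?c \<otimes> ?v) - q ?c - q (?u \<otimes> ?v)\<bar> \<le> D"
    using carrier by (intro q_insert) auto
  moreover have "q ?c = of_int (y n - x n) * q (g n)"
    using carrier by (simp add: q_int_pow)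
  moreover have "\<bar>q (?u \<otimes> ?v) - (\<Sum>j<n. of_int (y j - x j) * q (g j))\<bar> \<le> real n * D"
    using Suc by auto
  ultimately show ?case
    using pow_prod_quotient_Suc[OF Suc.prems] by (simp add: algebra_simps)
qed

end

context word_metric
begin

lemma hqm_abs_le_word_length:
  assumes hqm: "homogeneous_quasi_morphism G q D" and bound: "\<forall>s\<in>S. \<bar>q s\<bar> \<le> B"
    and "is_word n a"
  shows "\<bar>q a\<bar> \<le> real n * (B + D)"
proof -
  interpret homogeneous_quasi_morphism G q D by (rule hqm)
  from \<open>is_word n a\<close> show ?thesis
  proof (induction rule: is_word.induct)
    case Nil
    then show ?case by (simp add: q_one)
  next
    case (Cons x n a)
    have "x \<in> carrier G" "a \<in> carrier G"
      using Cons.hyps letters_subset_carrier is_word_carrier by auto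
    moreover have "\<bar>q x\<bar> \<le> B"
      using Cons.hyps bound S_subset by (auto simp: q_inv)
    ultimately show ?case
      using defect_le[of x a] Cons.IH by (simp add: algebra_simps)
  qed
qed

lemma hqm_pow_prod_estimate:
  assumes "homogeneous_quasi_morphism G q D" "\<forall>s\<in>S. \<bar>q s\<bar> \<le> B"
    and "generate G S = carrier G" "\<forall>j<n. g j \<in> carrier G"
  shows "\<bar>\<Sum>j<n. of_int (y j - x j) * q (g j)\<bar>
    \<le> real (cay_dist G S (pow_prod G g x n) (pow_prod G g y n)) * (B + D) + real n * D"
proof -
  let ?a = "pow_prod G g y n \<otimes> inv (pow_prod G g x n)"
  have "is_word (cay_dist G S (pow_prod G g x n) (pow_prod G g y n)) ?a"
    using assms(3,4) by (intro is_word_cay_dist pow_prod_carrier)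
  then have "\<bar>q ?a\<bar> \<le> real (cay_dist G S (pow_prod G g x n) (pow_prod G g y n)) * (B + D)"
    by (rule hqm_abs_le_word_length[OF assms(1,2)])
  moreover have "\<bar>q ?a - (\<Sum>j<n. of_int (y j - x j) * q (g j))\<bar> \<le> real n * D"
    using homogeneous_quasi_morphism.q_pow_prod_quotient[OF assms(1,4)] .
  ultimately show ?thesis by linarith
qed

end

section \<open>Dual points of linearly independent functions\<close>

lemma lin_indep_on_residual:
  assumes indep: "lin_indep_on G m q" and "n < m"
    and supp: "\<forall>k<n. \<forall>i\<ge>n. c k i = 0"
    and dual: "\<forall>k<n. \<forall>j<n. (\<Sum>i<m. c k i * q i (g j)) = (if k = j then 1 else 0)"
  obtains a h0 where "\<forall>i\<ge>Suc n. a i = 0" "\<forall>j<n. (\<Sum>i<m. a i * q i (g j)) = 0"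
    "h0 \<in> carrier G" "(\<Sum>i<m. a i * q i h0) \<noteq> 0"
proof -
  let ?ev = "\<lambda>u h. \<Sum>i<m. u i * q i h"
  \<comment> \<open>The coefficients of q n minus its interpolant through the dual functions ?ev (c j).\<close>
  define a where "a i = (if i = n then 1 else 0) - (\<Sum>j<n. q n (g j) * c j i)" for i
  have a_eq: "?ev a h = q n h - (\<Sum>j<n. q n (g j) * ?ev (c j) h)" for h
  proof -
    have "?ev a h = (\<Sum>i<m. (if i = n then 1 else 0) * q i h) - (\<Sum>i<m. (\<Sum>j<n. q n (g j) * c j i) * q i h)"
      by (simp add: a_def left_diff_distrib sum_subtractf)
    also have "(\<Sum>i<m. (if i = n then 1 else 0) * q i h) = (\<Sum>i<m. if i = n then q i h else 0)"
      by (rule sum.cong) auto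
    also have "\<dots> = q n h"
      using \<open>n < m\<close> by simp
    also have "(\<Sum>i<m. (\<Sum>j<n. q n (g j) * c j i) * q i h) = (\<Sum>j<n. q n (g j) * ?ev (c j) h)"
      by (simp add: sum.swap[of _ "{..<m}"] sum_distrib_left sum_distrib_right mult.assoc)
    finally show ?thesis .
  qed
  have "?ev a (g j) = 0" if "j < n" for j
  proof -
    have "(\<Sum>k<n. q n (g k) * ?ev (c k) (g j)) = (\<Sum>k<n. if k = j then q n (g k) else 0)"
      by (rule sum.cong) (use dual that in auto)
    then show ?thesis
      using that by (simp add: a_eq)
  qed
  moreover have "a n = 1"
    using supp by (simp add: a_def)
  then obtain h0 where "h0 \<in> carrier G" "?ev a h0 \<noteq> 0"
    using indep \<open>n < m\<close> unfolding lin_indep_on_def by fastforce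
  moreover have "\<forall>i\<ge>Suc n. a i = 0"
    using supp by (simp add: a_def)
  ultimately show thesis
    using that by blast
qed

lemma lin_indep_on_dual_points_upto:
  assumes indep: "lin_indep_on G m q" and "n \<le> m"
  shows "\<exists>g c. (\<forall>j<n. g j \<in> carrier G) \<and> (\<forall>k<n. \<forall>i\<ge>n. c k i = 0) \<and>
    (\<forall>k<n. \<forall>j<n. (\<Sum>i<m. c k i * q i (g j)) = (if k = j then 1 else 0))"
  using \<open>n \<le> m\<close>
proof (induction n)
  case 0
  then show ?case by simp
next
  case (Suc n)
  then obtain g c where g: "\<forall>j<n. g j \<in> carrier G" and supp: "\<forall>k<n. \<forall>i\<ge>n. c k i = 0"
    and dual: "\<forall>k<n. \<forall>j<n. (\<Sum>i<m. c k i * q i (g j)) = (if k = j then 1 else 0)"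
    by auto
  let ?ev = "\<lambda>u h. \<Sum>i<m. u i * q i h"
  obtain a h0 where supp_a: "\<forall>i\<ge>Suc n. a i = 0" and a_g: "\<forall>j<n. ?ev a (g j) = 0"
    and h0: "h0 \<in> carrier G" "?ev a h0 \<noteq> 0"
    using lin_indep_on_residual[OF indep _ supp dual] Suc.prems by auto
  have ev_lin: "?ev (\<lambda>i. u i - t * v i) h = ?ev u h - t * ?ev v h" for u v t h
    by (simp add: left_diff_distrib sum_subtractf sum_distrib_left mult.assoc)
  define \<rho> where "\<rho> = ?ev a h0"
  define g' where "g' = g(n := h0)"
  define c' where "c' k = (if k = n then (\<lambda>i. a i / \<rho>) else (\<lambda>i. c k i - ?ev (c k) h0 / \<rho> * a i))"
    for k
  have "\<forall>k<Suc n. \<forall>i\<ge>Suc n. c' k i = 0"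
    using supp supp_a by (auto simp: c'_def less_Suc_eq)
  moreover have "?ev (c' k) (g' j) = (if k = j then 1 else 0)" if "k < Suc n" "j < Suc n" for k j
  proof (cases "k = n")
    case True
    have "?ev (c' k) (g' j) = ?ev a (g' j) / \<rho>"
      using True by (simp add: c'_def sum_divide_distrib)
    then show ?thesis
      using True that a_g h0 by (auto simp: \<rho>_def g'_def less_Suc_eq)
  next
    case False
    then have "c' k = (\<lambda>i. c k i - ?ev (c k) h0 / \<rho> * a i)"
      by (simp add: c'_def)
    then have "?ev (c' k) (g' j) = ?ev (c k) (g' j) - ?ev (c k) h0 / \<rho> * ?ev a (g' j)"
      by (simp only: ev_lin)
    then show ?thesis
      using False that a_g dual h0 by (auto simp: \<rho>_def g'_def less_Suc_eq)
  qed
  moreover have "\<forall>j<Suc n. g' j \<in> carrier G"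
    using g h0 by (simp add: g'_def less_Suc_eq)
  ultimately show ?case by blast
qed

lemma lin_indep_on_dual_points:
  assumes "lin_indep_on G m q"
  obtains g c where "\<forall>j<m. g j \<in> carrier G"
    and "\<forall>k<m. \<forall>j<m. (\<Sum>i<m. c k i * q i (g j)) = (if k = j then 1 else 0)"
  using lin_indep_on_dual_points_upto[OF assms order_refl] by blast

lemma sum_abs_le_by_dual_basis:
  fixes c Q :: "nat \<Rightarrow> nat \<Rightarrow> real" and z :: "nat \<Rightarrow> real"
  assumes dual: "\<forall>k<m. \<forall>j<m. (\<Sum>i<m. c k i * Q i j) = (if k = j then 1 else 0)"
    and bound: "\<forall>i<m. \<bar>\<Sum>j<m. z j * Q i j\<bar> \<le> E"
  shows "(\<Sum>k<m. \<bar>z k\<bar>) \<le> (\<Sum>k<m. \<Sum>i<m. \<bar>c k i\<bar>) * E"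
proof -
  have "\<bar>z k\<bar> \<le> (\<Sum>i<m. \<bar>c k i\<bar>) * E" if "k < m" for k
  proof -
    have "(\<Sum>i<m. c k i * (\<Sum>j<m. z j * Q i j)) = (\<Sum>i<m. \<Sum>j<m. z j * (c k i * Q i j))"
      by (simp add: sum_distrib_left mult.left_commute)
    also have "\<dots> = (\<Sum>j<m. z j * (\<Sum>i<m. c k i * Q i j))"
      by (subst sum.swap) (simp add: sum_distrib_left)
    also have "\<dots> = (\<Sum>j<m. if j = k then z j else 0)"
      by (rule sum.cong) (use dual that in auto)
    finally have "z k = (\<Sum>i<m. c k i * (\<Sum>j<m. z j * Q i j))"
      using that by simp
    also have "\<bar>\<dots>\<bar> \<le> (\<Sum>i<m. \<bar>c k i\<bar> * E)"
      using bound by (intro order.trans[OF sum_abs] sum_mono) (auto simp: abs_mult mult_left_mono)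
    finally show ?thesis
      by (simp add: sum_distrib_right)
  qed
  then have "(\<Sum>k<m. \<bar>z k\<bar>) \<le> (\<Sum>k<m. (\<Sum>i<m. \<bar>c k i\<bar>) * E)"
    by (intro sum_mono) auto
  then show ?thesis
    by (simp add: sum_distrib_right)
qed

section \<open>The quasi-isometric embedding\<close>

lemma finite_family_uniform_bound:
  fixes f :: "nat \<Rightarrow> 'a \<Rightarrow> real"
  assumes "\<forall>i<m. \<exists>B. \<forall>x\<in>A i. f i x \<le> B"
  obtains B where "B \<ge> 0" "\<forall>i<m. \<forall>x\<in>A i. f i x \<le> B"
proof -
  obtain B where B: "\<forall>i<m. \<forall>x\<in>A i. f i x \<le> B i"
    using assms by metis
  have "f i x \<le> (\<Sum>i<m. \<bar>B i\<bar>)" if "i < m" "x \<in> A i" for i x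
    using B that member_le_sum[of i "{..<m}" "\<lambda>i. \<bar>B i\<bar>"] by fastforce
  then show thesis
    by (intro that[of "\<Sum>i<m. \<bar>B i\<bar>"]) (auto intro: sum_nonneg)
qed

lemma homogeneous_quasi_morphisms_common_defect:
  fixes q :: "nat \<Rightarrow> 'a \<Rightarrow> real"
  assumes "group G" "\<forall>i<m. quasi_morphism G (q i) \<and> homogeneous G (q i)"
  obtains D where "D \<ge> 0" "\<forall>i<m. homogeneous_quasi_morphism G (q i) D"
proof -
  let ?defect = "\<lambda>i p. \<bar>q i (fst p \<otimes>\<^bsub>G\<^esub> snd p) - q i (fst p) - q i (snd p)\<bar>"
  have "\<forall>i<m. \<exists>D. \<forall>p\<in>carrier G \<times> carrier G. ?defect i p \<le> D"
    using assms(2) unfolding quasi_morphism_def by fastforce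
  then obtain D where "D \<ge> 0" and D: "\<forall>i<m. \<forall>p\<in>carrier G \<times> carrier G. ?defect i p \<le> D"
    by (rule finite_family_uniform_bound)
  have "homogeneous_quasi_morphism G (q i) D" if "i < m" for i
    using assms D[rule_format, OF that] that
    by (auto simp: homogeneous_quasi_morphism_def homogeneous_quasi_morphism_axioms_def)
  with \<open>D \<ge> 0\<close> show thesis
    by (intro that) auto
qed

lemma qi_embedding_Zm_CayI:
  assumes "\<forall>x\<in>Zm m. f x \<in> carrier G" "a \<ge> 0" "b \<ge> 0" "a' \<ge> 0" "b' \<ge> 0"
    and upper: "\<And>x y. real (cay_dist G S (f x) (f y)) \<le> a * l1_dist m x y + b"
    and lower: "\<And>x y. l1_dist m x y \<le> a' * real (cay_dist G S (f x) (f y)) + b'"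
  shows "qi_embedding_Zm_Cay m G S f"
proof -
  define K where "K = 1 + a + a'"
  have "K \<ge> 1" "a \<le> K" "a' \<le> K"
    using assms(2,4) by (auto simp: K_def)
  have "l1_dist m x y / K - (b + b') \<le> real (cay_dist G S (f x) (f y))" for x y
  proof -
    have "a' * real (cay_dist G S (f x) (f y)) \<le> K * real (cay_dist G S (f x) (f y))"
      using \<open>a' \<le> K\<close> by (simp add: mult_right_mono)
    moreover have "b' \<le> K * b'"
      using \<open>K \<ge> 1\<close> assms(5) by (simp add: mult_le_cancel_right1)
    ultimately have "l1_dist m x y \<le> K * (real (cay_dist G S (f x) (f y)) + b')"
      using lower[of x y] by (simp add: distrib_left)
    then have "l1_dist m x y / K \<le> real (cay_dist G S (f x) (f y)) + b'"
      using \<open>K \<ge> 1\<close> by (subst pos_divide_le_eq) (auto simp: mult.commute)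
    then show ?thesis
      using assms(3) by simp
  qed
  moreover have "real (cay_dist G S (f x) (f y)) \<le> K * l1_dist m x y + (b + b')" for x y
  proof -
    have "a * l1_dist m x y \<le> K * l1_dist m x y"
      using \<open>a \<le> K\<close> by (intro mult_right_mono) (simp_all add: l1_dist_def sum_nonneg)
    then show ?thesis
      using upper[of x y] assms(5) by linarith
  qed
  moreover have "b + b' \<ge> 0"
    using assms(3,5) by simp
  ultimately show ?thesis
    unfolding qi_embedding_Zm_Cay_def using assms(1) \<open>K \<ge> 1\<close> by blast
qed

context word_metric
begin

lemma cay_dist_pow_prod_le_l1_dist:
  assumes "conj_invariant G S" "generate G S = carrier G" "\<forall>j<m. g j \<in> carrier G"
  shows "real (cay_dist G S (pow_prod G g x m) (pow_prod G g y m)) \<le>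
    (\<Sum>j<m. real (cay_dist G S \<one> (g j))) * l1_dist m x y"
proof -
  let ?\<Lambda> = "\<Sum>j<m. real (cay_dist G S \<one> (g j))"
  have "real (cay_dist G S (pow_prod G g x m) (pow_prod G g y m)) \<le>
      real (\<Sum>j<m. nat \<bar>y j - x j\<bar> * cay_dist G S \<one> (g j))"
    using cay_dist_pow_prod_le[OF assms] by (rule of_nat_mono)
  also have "\<dots> = (\<Sum>j<m. real_of_int \<bar>x j - y j\<bar> * real (cay_dist G S \<one> (g j)))"
    by (simp add: of_nat_sum abs_minus_commute)
  also have "\<dots> \<le> (\<Sum>j<m. real_of_int \<bar>x j - y j\<bar> * ?\<Lambda>)"
    by (intro sum_mono mult_left_mono member_le_sum) auto
  also have "\<dots> = ?\<Lambda> * l1_dist m x y"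
    unfolding l1_dist_def sum_distrib_right[symmetric] by (rule mult.commute)
  finally show ?thesis .
qed

lemma l1_dist_le_cay_dist_pow_prod:
  assumes "generate G S = carrier G" "\<forall>j<m. g j \<in> carrier G"
    and "\<forall>i<m. homogeneous_quasi_morphism G (q i) D" "\<forall>i<m. \<forall>s\<in>S. \<bar>q i s\<bar> \<le> B"
    and dual: "\<forall>k<m. \<forall>j<m. (\<Sum>i<m. c k i * q i (g j)) = (if k = j then 1 else 0)"
  shows "l1_dist m x y \<le> (\<Sum>k<m. \<Sum>i<m. \<bar>c k i\<bar>) * (B + D) *
      real (cay_dist G S (pow_prod G g x m) (pow_prod G g y m)) + (\<Sum>k<m. \<Sum>i<m. \<bar>c k i\<bar>) * real m * D"
proof -
  let ?E = "real (cay_dist G S (pow_prod G g x m) (pow_prod G g y m)) * (B + D) + real m * D"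
  have "\<forall>i<m. \<bar>\<Sum>j<m. real_of_int (y j - x j) * q i (g j)\<bar> \<le> ?E"
    using hqm_pow_prod_estimate[OF _ _ assms(1,2)] assms(3,4) by blast
  then have "(\<Sum>k<m. \<bar>real_of_int (y k - x k)\<bar>) \<le> (\<Sum>k<m. \<Sum>i<m. \<bar>c k i\<bar>) * ?E"
    by (rule sum_abs_le_by_dual_basis[OF dual])
  then show ?thesis
    by (simp add: l1_dist_def abs_minus_commute algebra_simps)
qed

end

theorem mainTheorem1:
  fixes G :: "('a, 'b) monoid_scheme" and S :: "'a set"
    and m :: nat and q :: "nat \<Rightarrow> 'a \<Rightarrow> real"
  assumes "group G"
    and "S \<subseteq> carrier G"
    and "conj_invariant G S"
    and "generate G S = carrier G"
    and "\<forall>i<m. quasi_morphism G (q i) \<and> homogeneous G (q i)"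
    and "lin_indep_on G m q"
    and "\<forall>i<m. \<exists>B. \<forall>s\<in>S. \<bar>q i s\<bar> \<le> B"
  shows "\<exists>f. qi_embedding_Zm_Cay m G S f"
proof -
  interpret word_metric G S
    using assms(1,2) by (simp add: word_metric_def word_metric_axioms_def)
  obtain g c where g: "\<forall>j<m. g j \<in> carrier G"
    and dual: "\<forall>k<m. \<forall>j<m. (\<Sum>i<m. c k i * q i (g j)) = (if k = j then 1 else 0)"
    using lin_indep_on_dual_points[OF assms(6)] by blast
  obtain D where "D \<ge> 0" and hqm: "\<forall>i<m. homogeneous_quasi_morphism G (q i) D"
    using homogeneous_quasi_morphisms_common_defect[OF assms(1,5)] by blast
  obtain B where "B \<ge> 0" and B: "\<forall>i<m. \<forall>s\<in>S. \<bar>q i s\<bar> \<le> B"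
    using finite_family_uniform_bound[of m "\<lambda>_. S" "\<lambda>i s. \<bar>q i s\<bar>"] assms(7) by blast
  let ?\<Gamma> = "\<Sum>k<m. \<Sum>i<m. \<bar>c k i\<bar>"
  have "qi_embedding_Zm_Cay m G S (\<lambda>x. pow_prod G g x m)"
  proof (rule qi_embedding_Zm_CayI[where b = 0 and a' = "?\<Gamma> * (B + D)" and b' = "?\<Gamma> * real m * D"])
    show "\<forall>x\<in>Zm m. pow_prod G g x m \<in> carrier G"
      using g by (simp add: pow_prod_carrier)
    show "real (cay_dist G S (pow_prod G g x m) (pow_prod G g y m)) \<le>
        (\<Sum>j<m. real (cay_dist G S \<one>\<^bsub>G\<^esub> (g j))) * l1_dist m x y + 0" for x y
      using cay_dist_pow_prod_le_l1_dist[OF assms(3,4) g] by simp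
    show "l1_dist m x y \<le> ?\<Gamma> * (B + D) * real (cay_dist G S (pow_prod G g x m) (pow_prod G g y m))
        + ?\<Gamma> * real m * D" for x y
      by (rule l1_dist_le_cay_dist_pow_prod[OF assms(4) g hqm B dual])
  qed (use \<open>B \<ge> 0\<close> \<open>D \<ge> 0\<close> in \<open>simp_all add: sum_nonneg\<close>)
  then show ?thesis by blast
qed

end
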